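(* Let $f\in(0,1)$ be a target frequency, $\epsilon>0$, $K,P\in\mathbb{Z}_{\ge1}$, and $\eta_g,\eta_s\in(0,1)$. Let $c$ be a candidate pattern whose true frequency $f_c\in[0,1]$ is the fraction of data owners whose local data contain $c$. Suppose $c$ has been responded to in $m_c\ge 1$ rounds, in each of which $P$ data owners respond, so $n_c=Pm_c$, and its accumulated response is $$r_c=\sum_{k=1}^{n_c} B_k+\sum_{\ell=1}^{m_c} G_\ell,$$ where $B_1,\dots,B_{n_c}$ are i.i.d. Bernoulli$(f_c)$ random variables (indicators that the sampled responding data owners contain $c$), $G_1,\dots,G_{m_c}$ are i.i.d. two-sided geometric random variables with parameter $\alpha=e^{-\epsilon/K}$, and the $B_k$ are independent of the $G_\ell$. Then $c$ is not a frequent pattern (i.e. $f_c< f$, or at least $f_c\le f$) with confidence $(1-\eta_g)(1-\eta_s)$ when $$\frac{r_c}{n_c}+\sqrt{\frac{2e^{-\epsilon/K}}{2(1-e^{-\epsilon/K})^2P^2m_c\eta_g}}+\sqrt{\frac{\ln\eta_s}{-2n_c}}\ \le\ f;$$ that is, with probability at least $(1-\eta_g)(1-\eta_s)$ one has $f_c\le \frac{r_c}{n_c}+\sqrt{\frac{2e^{-\epsilon/K}}{2(1-e^{-\epsilon/K})^2P^2m_c\eta_g}}+\sqrt{\frac{\ln\eta_s}{-2n_c}}$, so that whenever the left-hand side of the displayed inequality is at most $f$, $f_c\le f$.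
   Context: A two-sided geometric random variable $G(\alpha)$, $\alpha\in(0,1)$, has $\mathbb{P}(G(\alpha)=x)=\frac{1-\alpha}{1+\alpha}\alpha^{|x|}$ for $x\in\mathbb{Z}$; it arises as the aggregate of the distributed Pólya noises added by the $P$ responders of a candidate in one round. A pattern is frequent if its frequency among the data owners is at least the target frequency $f$. *)

theory Defs
  imports "HOL-Probability.Probability"
begin

definition two_sided_geom_pmf :: "real \<Rightarrow> int \<Rightarrow> real" where
  "two_sided_geom_pmf \<alpha> x = (1 - \<alpha>) / (1 + \<alpha>) * \<alpha> ^ nat \<bar>x\<bar>"

end

theory Submission
  imports Defs
begin

(* Write n = P m_c, S_B for the sum of the n Bernoulli indicators and S_G for the sum of the
   m_c geometric noises. Hoeffding's inequality gives S_B > n f_c - n b outside an event of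
   probability eta_s, b being the second square root. A two-sided geometric variable has a
   symmetric law with second moment 2 alpha / (1 - alpha)^2, so S_G is symmetric with second
   moment m_c times that; Chebyshev's inequality, halved by symmetry, gives S_G >= - n a outside
   an event of probability eta_g, a being the first square root. S_B and S_G are independent, so
   both bounds hold with probability at least (1 - eta_s)(1 - eta_g), and together they give
   f_c <= (S_B + S_G) / n + a + b. *)

lemma geometric_deriv2_sums:
  fixes z :: "'a :: {real_normed_field, banach}"
  assumes "norm z < 1"
  shows "(\<lambda>n. of_nat (Suc n) * of_nat (Suc (Suc n)) * z ^ n) sums (2 / (1 - z) ^ 3)"
proof -
  have "(\<lambda>n. diffs (\<lambda>n. of_nat (Suc n)) n * z ^ n) sums (2 / (1 - z) ^ 3)"
  proof (rule termdiffs_sums_strong[where K = 1])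
    fix w :: 'a assume "norm w < 1"
    then show "(\<lambda>n. of_nat (Suc n) * w ^ n) sums (1 / (1 - w) ^ 2)"
      by (rule geometric_deriv_sums)
  next
    have "1 - z \<noteq> 0" using assms by auto
    have "u \<noteq> 0 \<Longrightarrow> 2 * u / (u ^ 2) ^ 2 = 2 / u ^ 3" for u :: 'a
      by (simp add: field_simps power2_eq_square power3_eq_cube)
    from this[OF \<open>1 - z \<noteq> 0\<close>] \<open>1 - z \<noteq> 0\<close>
    show "((\<lambda>w. 1 / (1 - w) ^ 2) has_field_derivative 2 / (1 - z) ^ 3) (at z)"
      by (auto intro!: derivative_eq_intros)
  qed (use assms in auto)
  then show ?thesis
    by (simp add: diffs_def mult.commute)
qed

lemma nat_square_geometric_sums:
  fixes z :: "'a :: {real_normed_field, banach}"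
  assumes "norm z < 1"
  shows "(\<lambda>n. of_nat n ^ 2 * z ^ n) sums (z * (1 + z) / (1 - z) ^ 3)"
proof -
  have "2 / w ^ 3 - 3 * (1 / w ^ 2) + 1 / w = (1 - w) * (1 + (1 - w)) / w ^ 3" if "w \<noteq> 0" for w :: 'a
    using that by (simp add: field_simps power2_eq_square power3_eq_cube)
  moreover have "1 - z \<noteq> 0"
    using assms by auto
  ultimately have limit: "2 / (1 - z) ^ 3 - 3 * (1 / (1 - z) ^ 2) + 1 / (1 - z) = z * (1 + z) / (1 - z) ^ 3"
    by simp
  have "(\<lambda>n. of_nat (Suc n) * of_nat (Suc (Suc n)) * z ^ n - 3 * (of_nat (Suc n) * z ^ n) + z ^ n)
      sums (2 / (1 - z) ^ 3 - 3 * (1 / (1 - z) ^ 2) + 1 / (1 - z))"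
    using assms by (intro sums_add sums_diff sums_mult geometric_deriv2_sums geometric_deriv_sums geometric_sums)
  then show ?thesis
    unfolding limit by (simp add: algebra_simps power2_eq_square)
qed

lemma measure_eqI_countable_AE_borel:
  fixes M N :: "'b :: t1_space measure"
  assumes [simp]: "sets M = sets borel" "sets N = sets borel"
    and ae: "AE x in M. x \<in> \<Omega>" "AE x in N. x \<in> \<Omega>" and [simp]: "countable \<Omega>"
    and eq: "\<And>x. x \<in> \<Omega> \<Longrightarrow> emeasure M {x} = emeasure N {x}"
  shows "M = N"
proof (rule measure_eqI)
  fix A assume A: "A \<in> sets M"
  have countable_borel: "S \<in> sets borel" if "countable S" for S :: "'b set"
    by (rule sets.countable[OF _ that]) (auto intro: borel_closed)
  define A' where "A' = {x \<in> \<Omega>. x \<in> A}"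
  have A': "countable A'"
    unfolding A'_def by (rule countable_subset[of _ \<Omega>]) auto
  have "emeasure N A = emeasure N A'"
    using ae A countable_borel[OF A'] unfolding A'_def by (intro emeasure_eq_AE) auto
  also have "\<dots> = (\<integral>\<^sup>+x. emeasure N {x} \<partial>count_space A')"
    using A' by (intro emeasure_countable_singleton) auto
  also have "\<dots> = (\<integral>\<^sup>+x. emeasure M {x} \<partial>count_space A')"
    by (intro nn_integral_cong eq[symmetric]) (auto simp: A'_def)
  also have "\<dots> = emeasure M A'"
    using A' by (intro emeasure_countable_singleton[symmetric]) auto
  also have "\<dots> = emeasure M A"
    using ae A countable_borel[OF A'] unfolding A'_def by (intro emeasure_eq_AE) auto
  finally show "emeasure M A = emeasure N A" ..
qed simp

locale two_sided_geometric = prob_space +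
  fixes \<alpha> :: real and Z :: "'a \<Rightarrow> real"
  assumes random_variable [measurable]: "Z \<in> borel_measurable M"
    and \<alpha>: "0 < \<alpha>" "\<alpha> < 1"
    and prob_eq: "\<And>x. prob {\<omega> \<in> space M. Z \<omega> = real_of_int x} = two_sided_geom_pmf \<alpha> x"
begin

lemma AE_in_Ints: "AE \<omega> in M. Z \<omega> \<in> \<int>"
proof -
  \<comment> \<open>pairing k with -(k+1) turns the masses into the plain geometric series (1 - \<alpha>) \<alpha>^k\<close>
  define E where "E k = {\<omega> \<in> space M. Z \<omega> = real k \<or> Z \<omega> = - real (Suc k)}" for k
  have [measurable]: "E k \<in> events" for k
    unfolding E_def by measurable
  have "prob (E k) = two_sided_geom_pmf \<alpha> (int k) + two_sided_geom_pmf \<alpha> (- int (Suc k))" for k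
  proof -
    have "E k = {\<omega> \<in> space M. Z \<omega> = real_of_int (int k)} \<union> {\<omega> \<in> space M. Z \<omega> = real_of_int (- int (Suc k))}"
      unfolding E_def by auto
    then have "prob (E k) = prob {\<omega> \<in> space M. Z \<omega> = real_of_int (int k)}
        + prob {\<omega> \<in> space M. Z \<omega> = real_of_int (- int (Suc k))}"
      by (simp only:) (rule finite_measure_Union, auto)
    then show ?thesis
      by (simp only: prob_eq)
  qed
  also have "two_sided_geom_pmf \<alpha> (int k) + two_sided_geom_pmf \<alpha> (- int (Suc k))
      = (1 - \<alpha>) / (1 + \<alpha>) * (\<alpha> ^ k + \<alpha> ^ Suc k)" for k
    by (simp add: two_sided_geom_pmf_def nat_add_distrib distrib_left)
  also have "(1 - \<alpha>) / (1 + \<alpha>) * (\<alpha> ^ k + \<alpha> ^ Suc k) = (1 - \<alpha>) * \<alpha> ^ k" for k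
    using \<alpha> by (simp add: field_simps)
  finally have "(\<lambda>k. prob (E k)) sums ((1 - \<alpha>) * (1 / (1 - \<alpha>)))"
    using \<alpha> by (simp only:) (intro sums_mult geometric_sums, simp)
  moreover have "(\<lambda>k. prob (E k)) sums prob (\<Union>k. E k)"
    by (rule measure_UNION) (auto simp: disjoint_family_on_def E_def)
  ultimately have "prob (\<Union>k. E k) = 1"
    using \<alpha> by (simp add: sums_unique2)
  then have ae: "AE \<omega> in M. \<omega> \<in> (\<Union>k. E k)"
    by (intro AE_prob_1) auto
  have Ints: "Z \<omega> \<in> \<int>" if "\<omega> \<in> E k" for \<omega> k
  proof -
    have "Z \<omega> = of_int (int k) \<or> Z \<omega> = of_int (- int (Suc k))"
      using that unfolding E_def by simp
    then show ?thesis
      by (metis Ints_of_int)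
  qed
  show ?thesis
    by (rule AE_mp[OF ae AE_I2]) (use Ints in blast)
qed

lemma emeasure_distr_singleton:
  "emeasure (distr M borel Z) {real_of_int j} = ennreal (two_sided_geom_pmf \<alpha> j)"
proof -
  have "emeasure (distr M borel Z) {real_of_int j} = emeasure M {\<omega> \<in> space M. Z \<omega> = real_of_int j}"
    by (subst emeasure_distr) (auto intro!: arg_cong[where f = "emeasure M"])
  then show ?thesis
    by (simp add: emeasure_eq_measure prob_eq)
qed

lemma symmetric_distr: "distr M borel Z = distr M borel (\<lambda>\<omega>. - Z \<omega>)"
proof (rule measure_eqI_countable_AE_borel[where \<Omega> = \<int>])
  have "AE \<omega> in M. - Z \<omega> \<in> \<int>"
    using AE_in_Ints by eventually_elim (rule Ints_minus)
  then show "AE x in distr M borel Z. x \<in> \<int>" "AE x in distr M borel (\<lambda>\<omega>. - Z \<omega>). x \<in> \<int>"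
    using AE_in_Ints by (simp_all add: AE_distr_iff borel_closed)
  fix x :: real assume "x \<in> \<int>"
  then obtain j where x: "x = real_of_int j"
    by (auto elim: Ints_cases)
  have "emeasure (distr M borel (\<lambda>\<omega>. - Z \<omega>)) {x} = emeasure M {\<omega> \<in> space M. Z \<omega> = real_of_int (- j)}"
    unfolding x by (subst emeasure_distr) (auto intro!: arg_cong[where f = "emeasure M"])
  also have "\<dots> = emeasure (distr M borel Z) {x}"
    using prob_eq[of "- j"] by (simp add: x emeasure_eq_measure emeasure_distr_singleton two_sided_geom_pmf_def)
  finally show "emeasure (distr M borel Z) {x} = emeasure (distr M borel (\<lambda>\<omega>. - Z \<omega>)) {x}"
    by simp
qed (simp_all add: countable_int)

lemma nn_integral_square: "(\<integral>\<^sup>+\<omega>. ennreal (Z \<omega> ^ 2) \<partial>M) = ennreal (2 * \<alpha> / (1 - \<alpha>) ^ 2)"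
proof -
  define N where "N = distr M borel Z"
  define h where "h k x = ennreal (real k ^ 2) * (indicator {real k} x + indicator {- real k} x)"
    for k :: nat and x :: real
  have cancel: "2 * w / u * (\<alpha> * u / w ^ 3) = 2 * \<alpha> / w ^ 2" if "w \<noteq> 0" "u \<noteq> 0" for u w :: real
    using that by (simp add: field_simps power2_eq_square power3_eq_cube)
  have AE_N: "AE x in N. x \<in> \<int>"
    unfolding N_def using AE_in_Ints by (simp add: AE_distr_iff borel_closed)
  have h_sums: "(\<Sum>k. h k x) = ennreal (x ^ 2)" if "x \<in> \<int>" for x
  proof -
    from that obtain j where j: "x = real_of_int j"
      by (auto elim: Ints_cases)
    have "(\<lambda>k. h k x) = (\<lambda>k. if k = nat \<bar>j\<bar> then ennreal (x ^ 2) else 0)"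
      unfolding h_def j by (rule ext, cases "j \<ge> 0") (auto simp: indicator_def)
    then show ?thesis
      using sums_unique[OF sums_single[of "nat \<bar>j\<bar>" "\<lambda>_. ennreal (x ^ 2)"]] by simp
  qed
  have "(\<integral>\<^sup>+\<omega>. ennreal (Z \<omega> ^ 2) \<partial>M) = (\<integral>\<^sup>+x. ennreal (x ^ 2) \<partial>N)"
    unfolding N_def by (simp add: nn_integral_distr)
  also have "\<dots> = (\<integral>\<^sup>+x. (\<Sum>k. h k x) \<partial>N)"
    using AE_N by (intro nn_integral_cong_AE) (auto simp: h_sums)
  also have "\<dots> = (\<Sum>k. \<integral>\<^sup>+x. h k x \<partial>N)"
    by (intro nn_integral_suminf) (simp add: N_def h_def)
  also have "\<dots> = (\<Sum>k. ennreal (2 * (1 - \<alpha>) / (1 + \<alpha>) * (real k ^ 2 * \<alpha> ^ k)))"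
  proof (intro suminf_cong)
    fix k
    have "(\<integral>\<^sup>+x. h k x \<partial>N) = ennreal (real k ^ 2) * (emeasure N {real_of_int (int k)} + emeasure N {real_of_int (- int k)})"
      unfolding h_def by (simp add: N_def nn_integral_cmult nn_integral_add)
    also have "\<dots> = ennreal (2 * (1 - \<alpha>) / (1 + \<alpha>) * (real k ^ 2 * \<alpha> ^ k))"
      using \<alpha> unfolding N_def emeasure_distr_singleton
      by (simp add: two_sided_geom_pmf_def flip: ennreal_plus ennreal_mult)
    finally show "(\<integral>\<^sup>+x. h k x \<partial>N) = ennreal (2 * (1 - \<alpha>) / (1 + \<alpha>) * (real k ^ 2 * \<alpha> ^ k))" .
  qed
  also have "\<dots> = ennreal (2 * (1 - \<alpha>) / (1 + \<alpha>) * (\<alpha> * (1 + \<alpha>) / (1 - \<alpha>) ^ 3))"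
    using \<alpha> nat_square_geometric_sums[of \<alpha>]
    by (intro suminf_ennreal_eq sums_mult) auto
  also have "2 * (1 - \<alpha>) / (1 + \<alpha>) * (\<alpha> * (1 + \<alpha>) / (1 - \<alpha>) ^ 3) = 2 * \<alpha> / (1 - \<alpha>) ^ 2"
    using cancel[of "1 - \<alpha>" "1 + \<alpha>"] \<alpha> by simp
  finally show ?thesis .
qed

lemma integrable_square: "integrable M (\<lambda>\<omega>. Z \<omega> ^ 2)"
  and expectation_square: "expectation (\<lambda>\<omega>. Z \<omega> ^ 2) = 2 * \<alpha> / (1 - \<alpha>) ^ 2"
  using nn_integral_eq_integrable[of "\<lambda>\<omega>. Z \<omega> ^ 2" M "2 * \<alpha> / (1 - \<alpha>) ^ 2"] nn_integral_square \<alpha>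
  by auto

end

context prob_space
begin

lemma expectation_zero_one_valued:
  fixes X :: "'a \<Rightarrow> real"
  assumes [measurable]: "random_variable borel X" and X: "\<And>\<omega>. \<omega> \<in> space M \<Longrightarrow> X \<omega> \<in> {0, 1}"
  shows "expectation X = prob {\<omega> \<in> space M. X \<omega> = 1}"
proof -
  have "expectation X = expectation (indicator {\<omega> \<in> space M. X \<omega> = 1})"
    using X by (intro Bochner_Integration.integral_cong) (auto simp: indicator_def)
  then show ?thesis
    by simp
qed

lemma Hoeffding_lower_tail_confidence:
  fixes X :: "'i \<Rightarrow> 'a \<Rightarrow> real"
  assumes "finite I" "I \<noteq> {}" "indep_vars (\<lambda>_. borel) X I"
    and "\<And>i. i \<in> I \<Longrightarrow> AE \<omega> in M. X i \<omega> \<in> {0..1}"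
    and \<eta>: "0 < \<eta>" "\<eta> \<le> 1"
  shows "prob {\<omega> \<in> space M. (\<Sum>i\<in>I. X i \<omega>)
      \<le> (\<Sum>i\<in>I. expectation (X i)) - card I * sqrt (ln \<eta> / (- 2 * real (card I)))} \<le> \<eta>"
proof -
  interpret Hoeffding_ineq M I X "\<lambda>_. 0" "\<lambda>_. 1" "\<Sum>i\<in>I. expectation (X i)"
    by unfold_locales (use assms in auto)
  define n where "n = real (card I)"
  define \<delta> where "\<delta> = n * sqrt (ln \<eta> / (- 2 * n))"
  have n: "0 < n"
    unfolding n_def using assms(1,2) by (simp add: card_gt_0_iff)
  have q: "0 \<le> ln \<eta> / (- 2 * n)"
    using \<eta> n by (intro divide_nonpos_neg) auto
  then have "0 \<le> \<delta>" "\<delta> ^ 2 = n ^ 2 * (ln \<eta> / (- 2 * n))"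
    unfolding \<delta>_def using n by (simp_all add: power_mult_distrib)
  have "prob {\<omega> \<in> space M. (\<Sum>i\<in>I. X i \<omega>) \<le> (\<Sum>i\<in>I. expectation (X i)) - \<delta>}
      \<le> exp (- 2 * \<delta> ^ 2 / (\<Sum>i\<in>I. (1 - 0) ^ 2))"
    using \<open>0 \<le> \<delta>\<close> assms(1,2) by (intro Hoeffding_ineq_le) (auto simp: card_gt_0_iff)
  also have "- 2 * \<delta> ^ 2 / (\<Sum>i\<in>I. (1 - 0) ^ 2) = ln \<eta>"
    using \<open>\<delta> ^ 2 = _\<close> n by (simp add: n_def power2_eq_square)
  finally show ?thesis
    using \<eta> by (simp add: \<delta>_def n_def)
qed

lemma Bernoulli_sum_lower_tail:
  fixes B :: "'i \<Rightarrow> 'a \<Rightarrow> real" and p :: real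
  assumes "finite I" "I \<noteq> {}" and indep: "indep_vars (\<lambda>_. borel) B I"
    and B01: "\<And>i. i \<in> I \<Longrightarrow> \<forall>\<omega> \<in> space M. B i \<omega> \<in> {0, 1}"
    and p: "\<And>i. i \<in> I \<Longrightarrow> prob {\<omega> \<in> space M. B i \<omega> = 1} = p"
    and "0 < \<eta>" "\<eta> \<le> 1"
  shows "prob {\<omega> \<in> space M. (\<Sum>i\<in>I. B i \<omega>) \<le> card I * p - card I * sqrt (ln \<eta> / (- 2 * real (card I)))} \<le> \<eta>"
proof -
  have "expectation (B i) = p" if "i \<in> I" for i
    using indep that B01 p unfolding indep_vars_def by (subst expectation_zero_one_valued) auto
  then have "(\<Sum>i\<in>I. expectation (B i)) = card I * p"
    by simp
  moreover have "AE \<omega> in M. B i \<omega> \<in> {0..1}" if "i \<in> I" for i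
    using B01[OF that] by (intro AE_I2) force
  ultimately show ?thesis
    using Hoeffding_lower_tail_confidence[of I B \<eta>] assms by simp
qed

lemma indep_sets_reindex:
  assumes h: "inj_on h I" and indep: "indep_sets F (h ` I)"
  shows "indep_sets (\<lambda>i. F (h i)) I"
  unfolding indep_sets_def
proof (intro conjI ballI allI impI)
  show "F (h i) \<subseteq> events" if "i \<in> I" for i
    using indep that by (auto simp: indep_sets_def)
  fix J A assume J: "J \<subseteq> I" "J \<noteq> {}" "finite J" and A: "A \<in> Pi J (\<lambda>i. F (h i))"
  have inj: "inj_on h J"
    using h J(1) by (rule inj_on_subset)
  define A' where "A' j = A (the_inv_into J h j)" for j
  have A': "A' (h j) = A j" if "j \<in> J" for j
    unfolding A'_def using inj that by (simp add: the_inv_into_f_f)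
  have "A' \<in> Pi (h ` J) F"
    using A by (auto simp: A')
  then have "prob (\<Inter>j\<in>h ` J. A' j) = (\<Prod>j\<in>h ` J. prob (A' j))"
    using indep J unfolding indep_sets_def by (metis image_is_empty image_mono finite_imageI)
  then show "prob (\<Inter>j\<in>J. A j) = (\<Prod>j\<in>J. prob (A j))"
    by (simp add: prod.reindex[OF inj] A')
qed

lemma indep_vars_reindex:
  assumes "inj_on h I" "indep_vars M' X (h ` I)"
  shows "indep_vars (\<lambda>i. M' (h i)) (\<lambda>i. X (h i)) I"
  using assms indep_sets_reindex[OF assms(1), of "\<lambda>i. {X i -` A \<inter> space M | A. A \<in> sets (M' i)}"]
  unfolding indep_vars_def2 by auto

lemma indep_var_sum_disjoint:
  fixes X :: "'i \<Rightarrow> 'a \<Rightarrow> real"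
  assumes indep: "indep_vars (\<lambda>_. borel) X (I \<union> J)" and disj: "I \<inter> J = {}"
  shows "indep_var borel (\<lambda>\<omega>. \<Sum>i\<in>I. X i \<omega>) borel (\<lambda>\<omega>. \<Sum>j\<in>J. X j \<omega>)"
proof -
  have "indep_var
      borel ((\<lambda>f. \<Sum>i\<in>I. f i) \<circ> (\<lambda>\<omega>. restrict (\<lambda>i. X i \<omega>) I))
      borel ((\<lambda>f. \<Sum>j\<in>J. f j) \<circ> (\<lambda>\<omega>. restrict (\<lambda>i. X i \<omega>) J))"
    by (intro indep_var_compose[OF indep_var_restrict[OF indep disj]]) auto
  then show ?thesis
    by (simp add: comp_def)
qed

lemma indep_vars_case_sum:
  fixes X Y :: "'i \<Rightarrow> 'a \<Rightarrow> real"
  assumes indep: "indep_vars (\<lambda>_. borel) (case_sum X Y) (Inl ` I \<union> Inr ` J)"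
  shows "indep_vars (\<lambda>_. borel) X I" "indep_vars (\<lambda>_. borel) Y J"
    and "indep_var borel (\<lambda>\<omega>. \<Sum>i\<in>I. X i \<omega>) borel (\<lambda>\<omega>. \<Sum>j\<in>J. Y j \<omega>)"
proof -
  show "indep_vars (\<lambda>_. borel) X I" "indep_vars (\<lambda>_. borel) Y J"
    using indep_vars_reindex[OF inj_Inl indep_vars_subset[OF indep]]
      indep_vars_reindex[OF inj_Inr indep_vars_subset[OF indep]] by simp_all
  show "indep_var borel (\<lambda>\<omega>. \<Sum>i\<in>I. X i \<omega>) borel (\<lambda>\<omega>. \<Sum>j\<in>J. Y j \<omega>)"
    using indep_var_sum_disjoint[OF indep]
    by (simp only: sum.reindex inj_Inl inj_Inr comp_def sum.case) auto
qed

lemma expectation_eq_0_if_symmetric: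
  fixes X :: "'a \<Rightarrow> real"
  assumes [measurable]: "random_variable borel X"
    and sym: "distr M borel X = distr M borel (\<lambda>\<omega>. - X \<omega>)"
  shows "expectation X = 0"
proof -
  have "expectation X = integral\<^sup>L (distr M borel X) (\<lambda>x. x)"
    by (simp add: integral_distr)
  also have "\<dots> = integral\<^sup>L (distr M borel (\<lambda>\<omega>. - X \<omega>)) (\<lambda>x. x)"
    by (simp only: sym)
  also have "\<dots> = - expectation X"
    by (simp add: integral_distr)
  finally show ?thesis
    by simp
qed

lemma symmetric_Chebyshev_lower_tail:
  fixes X :: "'a \<Rightarrow> real"
  assumes [measurable]: "random_variable borel X"
    and sym: "distr M borel X = distr M borel (\<lambda>\<omega>. - X \<omega>)"
    and X2: "integrable M (\<lambda>\<omega>. X \<omega> ^ 2)" and t: "0 < t"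
  shows "prob {\<omega> \<in> space M. X \<omega> < - t} \<le> expectation (\<lambda>\<omega>. X \<omega> ^ 2) / (2 * t ^ 2)"
proof -
  have "prob {\<omega> \<in> space M. X \<omega> < - t} = measure (distr M borel X) {..< - t}"
    by (simp add: measure_distr vimage_def Int_def conj_commute)
  also have "\<dots> = measure (distr M borel (\<lambda>\<omega>. - X \<omega>)) {..< - t}"
    by (simp only: sym)
  also have "\<dots> = prob {\<omega> \<in> space M. t < X \<omega>}"
    by (simp add: measure_distr vimage_def Int_def conj_commute)
  finally have tails: "prob {\<omega> \<in> space M. X \<omega> < - t} = prob {\<omega> \<in> space M. t < X \<omega>}" .
  have "prob {\<omega> \<in> space M. X \<omega> < - t} + prob {\<omega> \<in> space M. t < X \<omega>}
      = prob ({\<omega> \<in> space M. X \<omega> < - t} \<union> {\<omega> \<in> space M. t < X \<omega>})"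
    using t by (intro finite_measure_Union[symmetric]) auto
  also have "\<dots> \<le> prob {\<omega> \<in> space M. \<bar>X \<omega> - expectation X\<bar> \<ge> t}"
    using expectation_eq_0_if_symmetric[OF _ sym] by (intro finite_measure_mono) auto
  also have "\<dots> \<le> variance X / t ^ 2"
    by (rule Chebyshev_inequality[OF _ X2 t]) simp
  also have "variance X = expectation (\<lambda>\<omega>. X \<omega> ^ 2)"
    using expectation_eq_0_if_symmetric[OF _ sym] by simp
  finally show ?thesis
    using tails by (simp add: field_simps)
qed

lemma symmetric_distr_sum:
  fixes X :: "'i \<Rightarrow> 'a \<Rightarrow> real"
  assumes indep: "indep_vars (\<lambda>_. borel) X I"
    and sym: "\<And>i. i \<in> I \<Longrightarrow> distr M borel (X i) = distr M borel (\<lambda>\<omega>. - X i \<omega>)"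
  shows "distr M borel (\<lambda>\<omega>. \<Sum>i\<in>I. X i \<omega>) = distr M borel (\<lambda>\<omega>. - (\<Sum>i\<in>I. X i \<omega>))"
proof (cases "I = {}")
  case False
  have rv [measurable]: "random_variable borel (X i)" if "i \<in> I" for i
    using indep that unfolding indep_vars_def by blast
  have indep': "indep_vars (\<lambda>_. borel) (\<lambda>i \<omega>. - X i \<omega>) I"
    by (rule indep_vars_compose2[OF indep]) auto
  \<comment> \<open>both joint laws are the product of the (equal) marginal laws\<close>
  have joint: "distr M (\<Pi>\<^sub>M i\<in>I. borel) (\<lambda>\<omega>. \<lambda>i\<in>I. X i \<omega>)
      = distr M (\<Pi>\<^sub>M i\<in>I. borel) (\<lambda>\<omega>. \<lambda>i\<in>I. - X i \<omega>)"
    using indep indep' sym False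
    by (simp add: indep_vars_iff_distr_eq_PiM' cong: PiM_cong)
  have sum_PiM [measurable]: "(\<lambda>f. \<Sum>i\<in>I. f i :: real) \<in> borel_measurable (\<Pi>\<^sub>M i\<in>I. borel)"
    by (rule borel_measurable_sum[of I "\<lambda>i f. f i", simplified]) (rule measurable_component_singleton)
  have "distr M borel (\<lambda>\<omega>. \<Sum>i\<in>I. X i \<omega>)
      = distr (distr M (\<Pi>\<^sub>M i\<in>I. borel) (\<lambda>\<omega>. \<lambda>i\<in>I. X i \<omega>)) borel (\<lambda>f. \<Sum>i\<in>I. f i)"
    by (subst distr_distr) (auto simp: comp_def intro!: distr_cong)
  also have "\<dots> = distr (distr M (\<Pi>\<^sub>M i\<in>I. borel) (\<lambda>\<omega>. \<lambda>i\<in>I. - X i \<omega>)) borel (\<lambda>f. \<Sum>i\<in>I. f i)"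
    by (simp only: joint)
  also have "\<dots> = distr M borel (\<lambda>\<omega>. - (\<Sum>i\<in>I. X i \<omega>))"
    by (subst distr_distr) (auto simp: comp_def sum_negf intro!: distr_cong)
  finally show ?thesis .
qed simp

lemma integrable_expectation_square_sum_indep:
  fixes X :: "'i \<Rightarrow> 'a \<Rightarrow> real"
  assumes "finite I" "indep_vars (\<lambda>_. borel) X I"
    and "\<And>i. i \<in> I \<Longrightarrow> integrable M (\<lambda>\<omega>. X i \<omega> ^ 2)"
    and "\<And>i. i \<in> I \<Longrightarrow> expectation (X i) = 0"
  shows "integrable M (\<lambda>\<omega>. (\<Sum>i\<in>I. X i \<omega>) ^ 2)
    \<and> expectation (\<lambda>\<omega>. (\<Sum>i\<in>I. X i \<omega>) ^ 2) = (\<Sum>i\<in>I. expectation (\<lambda>\<omega>. X i \<omega> ^ 2))"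
  using assms
proof (induction I rule: finite_induct)
  case (insert i I)
  define S where "S \<omega> = (\<Sum>j\<in>I. X j \<omega>)" for \<omega>
  have rv [measurable]: "random_variable borel (X j)" if "j \<in> insert i I" for j
    using insert.prems(1) that unfolding indep_vars_def by blast
  have "indep_vars (\<lambda>_. borel) X I"
    using insert.prems(1) by (rule indep_vars_subset) auto
  then have IH: "integrable M (\<lambda>\<omega>. S \<omega> ^ 2)"
      "expectation (\<lambda>\<omega>. S \<omega> ^ 2) = (\<Sum>j\<in>I. expectation (\<lambda>\<omega>. X j \<omega> ^ 2))"
    unfolding S_def using insert.IH insert.prems(2,3) by blast+
  have int_X: "integrable M (X j)" if "j \<in> insert i I" for j
    using rv[OF that] insert.prems(2)[OF that] by (rule square_integrable_imp_integrable)
  have int_S: "integrable M S"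
    unfolding S_def using int_X by (intro Bochner_Integration.integrable_sum) auto
  have exp_S: "expectation S = 0"
    unfolding S_def using int_X insert.prems(3) by (simp add: Bochner_Integration.integral_sum)
  have "indep_var borel (X i) borel S"
    unfolding S_def using insert.hyps insert.prems(1) by (rule indep_vars_sum)
  then have cross: "integrable M (\<lambda>\<omega>. X i \<omega> * S \<omega>)" "expectation (\<lambda>\<omega>. X i \<omega> * S \<omega>) = 0"
    using int_X[of i] int_S exp_S by (simp_all add: indep_var_integrable indep_var_lebesgue_integral)
  have square: "(\<Sum>j\<in>insert i I. X j \<omega>) ^ 2 = X i \<omega> ^ 2 + 2 * (X i \<omega> * S \<omega>) + S \<omega> ^ 2" for \<omega>
    using insert.hyps by (simp add: S_def power2_eq_square algebra_simps)
  have int_X2: "integrable M (\<lambda>\<omega>. X i \<omega> ^ 2)"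
    using insert.prems(2) by simp
  have "integrable M (\<lambda>\<omega>. X i \<omega> ^ 2 + 2 * (X i \<omega> * S \<omega>) + S \<omega> ^ 2)"
    using int_X2 cross(1) IH(1) by (intro Bochner_Integration.integrable_add integrable_mult_right)
  moreover have "expectation (\<lambda>\<omega>. X i \<omega> ^ 2 + 2 * (X i \<omega> * S \<omega>) + S \<omega> ^ 2)
      = expectation (\<lambda>\<omega>. X i \<omega> ^ 2) + (\<Sum>j\<in>I. expectation (\<lambda>\<omega>. X j \<omega> ^ 2))"
    using int_X2 cross IH by (simp add: Bochner_Integration.integral_add)
  ultimately show ?case
    unfolding square using insert.hyps by simp
qed simp

lemma two_sided_geometric_sum_lower_tail:
  fixes G :: "'i \<Rightarrow> 'a \<Rightarrow> real" and \<alpha> :: real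
  assumes "finite I" and indep: "indep_vars (\<lambda>_. borel) G I"
    and G: "\<And>i. i \<in> I \<Longrightarrow> two_sided_geometric M \<alpha> (G i)" and "0 < t"
  shows "prob {\<omega> \<in> space M. (\<Sum>i\<in>I. G i \<omega>) < - t} \<le> card I * \<alpha> / ((1 - \<alpha>) ^ 2 * t ^ 2)"
proof -
  have [measurable]: "random_variable borel (\<lambda>\<omega>. \<Sum>i\<in>I. G i \<omega>)"
    using G by (auto intro!: borel_measurable_sum dest: two_sided_geometric.random_variable)
  have sym: "distr M borel (\<lambda>\<omega>. \<Sum>i\<in>I. G i \<omega>) = distr M borel (\<lambda>\<omega>. - (\<Sum>i\<in>I. G i \<omega>))"
    using indep G by (intro symmetric_distr_sum) (auto dest: two_sided_geometric.symmetric_distr)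
  have "integrable M (\<lambda>\<omega>. (\<Sum>i\<in>I. G i \<omega>) ^ 2)
      \<and> expectation (\<lambda>\<omega>. (\<Sum>i\<in>I. G i \<omega>) ^ 2) = (\<Sum>i\<in>I. expectation (\<lambda>\<omega>. G i \<omega> ^ 2))"
    using \<open>finite I\<close> indep G
    by (intro integrable_expectation_square_sum_indep)
       (auto dest: two_sided_geometric.integrable_square
             intro: expectation_eq_0_if_symmetric two_sided_geometric.symmetric_distr
                    two_sided_geometric.random_variable)
  moreover have "expectation (\<lambda>\<omega>. G i \<omega> ^ 2) = 2 * \<alpha> / (1 - \<alpha>) ^ 2" if "i \<in> I" for i
    using G[OF that] by (rule two_sided_geometric.expectation_square)
  ultimately have "prob {\<omega> \<in> space M. (\<Sum>i\<in>I. G i \<omega>) < - t} \<le> card I * (2 * \<alpha> / (1 - \<alpha>) ^ 2) / (2 * t ^ 2)"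
    using symmetric_Chebyshev_lower_tail[OF _ sym _ \<open>0 < t\<close>] by simp
  then show ?thesis
    by (simp add: field_simps)
qed

lemma indep_var_prob_sum_greater:
  fixes X Y :: "'a \<Rightarrow> real"
  assumes indep: "indep_var borel X borel Y"
    and X: "prob {\<omega> \<in> space M. X \<omega> \<le> x} \<le> \<eta>\<^sub>1"
    and Y: "prob {\<omega> \<in> space M. Y \<omega> < y} \<le> \<eta>\<^sub>2" "\<eta>\<^sub>2 \<le> 1"
  shows "(1 - \<eta>\<^sub>1) * (1 - \<eta>\<^sub>2) \<le> prob {\<omega> \<in> space M. x + y < X \<omega> + Y \<omega>}"
proof -
  have [measurable]: "random_variable borel X" "random_variable borel Y"
    using indep by (auto dest: indep_var_rv1 indep_var_rv2)
  define A where "A = {\<omega> \<in> space M. X \<omega> \<in> {x<..}}"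
  define C where "C = {\<omega> \<in> space M. Y \<omega> \<in> {y..}}"
  have "A = space M - {\<omega> \<in> space M. X \<omega> \<le> x}" "C = space M - {\<omega> \<in> space M. Y \<omega> < y}"
    unfolding A_def C_def by auto
  then have "prob A = 1 - prob {\<omega> \<in> space M. X \<omega> \<le> x}" "prob C = 1 - prob {\<omega> \<in> space M. Y \<omega> < y}"
    by (simp_all add: prob_compl)
  then have "(1 - \<eta>\<^sub>1) * (1 - \<eta>\<^sub>2) \<le> prob A * prob C"
    using X Y by (intro mult_mono) auto
  also have "prob A * prob C = prob (A \<inter> C)"
    using prob_indep_random_variable[OF indep, of "{x<..}" "{y..}"] unfolding A_def C_def
    by (simp add: Int_def conj_ac)
  also have "\<dots> \<le> prob {\<omega> \<in> space M. x + y < X \<omega> + Y \<omega>}"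
    unfolding A_def C_def by (intro finite_measure_mono) auto
  finally show ?thesis .
qed

end

(* The first square root is chosen so that the Chebyshev bound for the noise is exactly eta_g. *)
lemma noise_radius_eq:
  fixes \<alpha> \<eta> :: real and P m :: nat
  assumes "0 < \<alpha>" "\<alpha> < 1" "0 < \<eta>" "1 \<le> P" "1 \<le> m"
  shows "real m * \<alpha> / ((1 - \<alpha>) ^ 2
      * (real (P * m) * sqrt (2 * \<alpha> / (2 * (1 - \<alpha>) ^ 2 * (real P) ^ 2 * real m * \<eta>))) ^ 2) = \<eta>"
proof -
  define w where "w = 1 - \<alpha>"
  have "w \<noteq> 0"
    using assms(2) by (simp add: w_def)
  have "sqrt (2 * \<alpha> / (2 * w ^ 2 * (real P) ^ 2 * real m * \<eta>)) ^ 2 = 2 * \<alpha> / (2 * w ^ 2 * (real P) ^ 2 * real m * \<eta>)"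
    using assms by (intro real_sqrt_pow2) simp
  with \<open>w \<noteq> 0\<close> show ?thesis
    unfolding w_def[symmetric] power_mult_distrib using assms
    by (simp add: field_simps power2_eq_square)
qed

theorem theorem4:
  fixes M :: "'a measure"
    and f f\<^sub>c \<epsilon> \<eta>\<^sub>g \<eta>\<^sub>s :: real
    and K P m\<^sub>c :: nat
    and B G :: "nat \<Rightarrow> 'a \<Rightarrow> real"
  assumes "prob_space M"
    and "0 < f" "f < 1"
    and "0 < \<epsilon>"
    and "1 \<le> K" "1 \<le> P"
    and "0 < \<eta>\<^sub>g" "\<eta>\<^sub>g < 1" "0 < \<eta>\<^sub>s" "\<eta>\<^sub>s < 1"
    and "0 \<le> f\<^sub>c" "f\<^sub>c \<le> 1"
    and "1 \<le> m\<^sub>c"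
    and B_bin: "\<And>k. k \<in> {1..P * m\<^sub>c} \<Longrightarrow> \<forall>\<omega>\<in>space M. B k \<omega> \<in> {0, 1}"
    and B_bern: "\<And>k. k \<in> {1..P * m\<^sub>c} \<Longrightarrow> measure M {\<omega> \<in> space M. B k \<omega> = 1} = f\<^sub>c"
    and G_geom: "\<And>l x. l \<in> {1..m\<^sub>c} \<Longrightarrow>
        measure M {\<omega> \<in> space M. G l \<omega> = real_of_int x} = two_sided_geom_pmf (exp (- \<epsilon> / real K)) x"
    and indep: "prob_space.indep_vars M (\<lambda>_. borel) (\<lambda>i. case_sum B G i)
                  (Inl ` {1..P * m\<^sub>c} \<union> Inr ` {1..m\<^sub>c})"
  shows "measure M {\<omega> \<in> space M.
            f\<^sub>c \<le> ((\<Sum>k=1..P * m\<^sub>c. B k \<omega>) + (\<Sum>l=1..m\<^sub>c. G l \<omega>)) / real (P * m\<^sub>c)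
                 + sqrt (2 * exp (- \<epsilon> / real K)
                     / (2 * (1 - exp (- \<epsilon> / real K))^2 * (real P)^2 * real m\<^sub>c * \<eta>\<^sub>g))
                 + sqrt (ln \<eta>\<^sub>s / (- 2 * real (P * m\<^sub>c)))}
         \<ge> (1 - \<eta>\<^sub>g) * (1 - \<eta>\<^sub>s)
       \<and> measure M {\<omega> \<in> space M.
            ((\<Sum>k=1..P * m\<^sub>c. B k \<omega>) + (\<Sum>l=1..m\<^sub>c. G l \<omega>)) / real (P * m\<^sub>c)
                 + sqrt (2 * exp (- \<epsilon> / real K)
                     / (2 * (1 - exp (- \<epsilon> / real K))^2 * (real P)^2 * real m\<^sub>c * \<eta>\<^sub>g))
                 + sqrt (ln \<eta>\<^sub>s / (- 2 * real (P * m\<^sub>c))) \<le> f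
            \<longrightarrow> f\<^sub>c \<le> f}
         \<ge> (1 - \<eta>\<^sub>g) * (1 - \<eta>\<^sub>s)"
proof -
  interpret prob_space M by fact
  define n where "n = P * m\<^sub>c"
  define \<alpha> where "\<alpha> = exp (- \<epsilon> / real K)"
  define a where "a = sqrt (2 * \<alpha> / (2 * (1 - \<alpha>)^2 * (real P)^2 * real m\<^sub>c * \<eta>\<^sub>g))"
  define b where "b = sqrt (ln \<eta>\<^sub>s / (- 2 * real n))"
  define SB where "SB \<omega> = (\<Sum>k=1..n. B k \<omega>)" for \<omega>
  define SG where "SG \<omega> = (\<Sum>l=1..m\<^sub>c. G l \<omega>)" for \<omega>
  have "0 < \<alpha>" "\<alpha> < 1" "1 \<le> n"
    using assms(4,5,6,13) by (auto simp: \<alpha>_def n_def)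
  have indep_n: "indep_vars (\<lambda>_. borel) (case_sum B G) (Inl ` {1..n} \<union> Inr ` {1..m\<^sub>c})"
    using indep by (simp add: n_def)
  note indep_B = indep_vars_case_sum(1)[OF indep_n] and indep_G = indep_vars_case_sum(2)[OF indep_n]
  have indep_sums: "indep_var borel SB borel SG"
    using indep_vars_case_sum(3)[OF indep_n] unfolding SB_def SG_def .
  then have [measurable]: "random_variable borel SB" "random_variable borel SG"
    by (auto dest: indep_var_rv1 indep_var_rv2)
  have Bernoulli: "prob {\<omega> \<in> space M. SB \<omega> \<le> real n * f\<^sub>c - real n * b} \<le> \<eta>\<^sub>s"
    using Bernoulli_sum_lower_tail[OF _ _ indep_B B_bin B_bern, of \<eta>\<^sub>s] assms(9,10) \<open>1 \<le> n\<close>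
    by (simp add: SB_def n_def b_def)
  have "0 < a"
    using \<open>0 < \<alpha>\<close> \<open>\<alpha> < 1\<close> assms(6,7,13) by (simp add: a_def)
  have "two_sided_geometric M \<alpha> (G l)" if "l \<in> {1..m\<^sub>c}" for l
    using indep_G that G_geom \<open>0 < \<alpha>\<close> \<open>\<alpha> < 1\<close> by unfold_locales (auto simp: \<alpha>_def indep_vars_def)
  then have noise: "prob {\<omega> \<in> space M. SG \<omega> < - (real n * a)} \<le> \<eta>\<^sub>g"
    using two_sided_geometric_sum_lower_tail[OF _ indep_G, of \<alpha> "real n * a"] \<open>0 < a\<close> \<open>1 \<le> n\<close>
      noise_radius_eq[of \<alpha> \<eta>\<^sub>g P m\<^sub>c] \<open>0 < \<alpha>\<close> \<open>\<alpha> < 1\<close> assms(6,7,13)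
    by (simp add: SG_def a_def n_def)
  have "(1 - \<eta>\<^sub>s) * (1 - \<eta>\<^sub>g) \<le> prob {\<omega> \<in> space M. (real n * f\<^sub>c - real n * b) + - (real n * a) < SB \<omega> + SG \<omega>}"
    by (rule indep_var_prob_sum_greater[OF indep_sums Bernoulli noise]) (use assms(8) in simp)
  also have "\<dots> \<le> prob {\<omega> \<in> space M. f\<^sub>c \<le> (SB \<omega> + SG \<omega>) / real n + a + b}"
  proof (rule finite_measure_mono)
    show "{\<omega> \<in> space M. (real n * f\<^sub>c - real n * b) + - (real n * a) < SB \<omega> + SG \<omega>}
        \<subseteq> {\<omega> \<in> space M. f\<^sub>c \<le> (SB \<omega> + SG \<omega>) / real n + a + b}"
      using \<open>1 \<le> n\<close> by (auto simp: field_simps)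
  qed measurable
  finally have confidence: "(1 - \<eta>\<^sub>g) * (1 - \<eta>\<^sub>s) \<le> prob {\<omega> \<in> space M. f\<^sub>c \<le> (SB \<omega> + SG \<omega>) / real n + a + b}"
    by (simp add: mult.commute)
  also have "\<dots> \<le> prob {\<omega> \<in> space M. (SB \<omega> + SG \<omega>) / real n + a + b \<le> f \<longrightarrow> f\<^sub>c \<le> f}"
    by (rule finite_measure_mono) (auto, measurable)
  finally show ?thesis
    using confidence unfolding a_def b_def n_def \<alpha>_def SB_def SG_def by simp
qed

end
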